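(* Let $\|\cdot\|_c$ and $\|\cdot\|_s$ be norms on $\mathbb{R}^d$, let $f(x)=\frac12\|x\|_c^2$, and suppose $g(x)=\frac12\|x\|_s^2$ is $L$-smooth with respect to $\|\cdot\|_s$. Let $\ell_{cs}\in(0,1]$ and $u_{cs}\in[1,\infty)$ satisfy $\ell_{cs}\|x\|_c\le\|x\|_s\le u_{cs}\|x\|_c$ for all $x$. For $\mu>0$ define $M(x)=\min_{u\in\mathbb{R}^d}\{f(u)+\frac1\mu g(x-u)\}$. Then: (1) $M$ is convex and $L/\mu$-smooth with respect to $\|\cdot\|_s$; (2) for all $x\in\mathbb{R}^d$, $(1+\mu/u_{cs}^2)M(x)\le f(x)\le(1+\mu/\ell_{cs}^2)M(x)$; (3) there exists a norm $\|\cdot\|_M$ on $\mathbb{R}^d$ such that $M(x)=\frac12\|x\|_M^2$ for all $x$.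
   Context: A convex differentiable function $h:\mathbb{R}^d\to\mathbb{R}$ is $L$-smooth with respect to a norm $\|\cdot\|$ if $h(y)\le h(x)+\langle\nabla h(x),y-x\rangle+\frac L2\|x-y\|^2$ for all $x,y\in\mathbb{R}^d$, where $\langle x,y\rangle=x^\top y$. The function $M$ is the generalized Moreau envelope of $f$ with respect to $g$ (the minimum is attained). *)

theory Defs
  imports "HOL-Analysis.Analysis"
begin

definition is_norm :: "('a::real_vector \<Rightarrow> real) \<Rightarrow> bool" where
  "is_norm N \<longleftrightarrow>
     (\<forall>x. 0 \<le> N x) \<and> (\<forall>x. N x = 0 \<longleftrightarrow> x = 0) \<and>
     (\<forall>c x. N (c *\<^sub>R x) = \<bar>c\<bar> * N x) \<and>
     (\<forall>x y. N (x + y) \<le> N x + N y)"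

text \<open>L-smoothness of a convex differentiable function w.r.t. the norm N;
  the term frechet_derivative h (at x) (y - x) is the inner product of the gradient of h at x with y - x.\<close>
definition smooth_wrt :: "(real^'d \<Rightarrow> real) \<Rightarrow> real \<Rightarrow> (real^'d \<Rightarrow> real) \<Rightarrow> bool" where
  "smooth_wrt N L h \<longleftrightarrow>
     convex_on UNIV h \<and> (\<forall>x. h differentiable (at x)) \<and>
     (\<forall>x y. h y \<le> h x + frechet_derivative h (at x) (y - x) + L / 2 * (N (x - y))\<^sup>2)"

definition moreau_env :: "(real^'d \<Rightarrow> real) \<Rightarrow> (real^'d \<Rightarrow> real) \<Rightarrow> real \<Rightarrow> real^'d \<Rightarrow> real" where
  "moreau_env f g \<mu> x = (INF u. f u + (1 / \<mu>) * g (x - u))"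

end

theory Submission
  imports Defs
begin

text \<open>
  Both \<open>f\<close> and \<open>g\<close> are convex and positively homogeneous of degree two, and the infimal
  convolution \<open>M\<close> inherits both properties; a convex, 2-homogeneous function that vanishes only
  at the origin is half the square of a norm (its unit sublevel set is the unit ball).
  If \<open>u\<close> minimises the envelope at \<open>x\<close>, then \<open>M y \<le> f u + g (y - u) / \<mu>\<close> for every \<open>y\<close>,
  so the smoothness inequality of \<open>g\<close> at \<open>x - u\<close> transfers to \<open>M\<close> at \<open>x\<close> with constant
  \<open>L / \<mu>\<close>; together with convexity this quadratic upper bound forces differentiability.
  The two comparison bounds come from testing \<open>u\<close> on the ray through \<open>x\<close> and from the
  weighted Cauchy--Schwarz inequality \<open>(a + b)\<^sup>2 \<le> (1 + p) (a\<^sup>2 + b\<^sup>2 / p)\<close>.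
\<close>

section \<open>Norms\<close>

context
  fixes N :: "'a::real_vector \<Rightarrow> real"
  assumes N: "is_norm N"
begin

lemma is_norm_nonneg: "0 \<le> N x"
  using N by (simp add: is_norm_def)

lemma is_norm_eq_zero_iff: "N x = 0 \<longleftrightarrow> x = 0"
  using N by (simp add: is_norm_def)

lemma is_norm_scaleR: "N (c *\<^sub>R x) = \<bar>c\<bar> * N x"
  using N by (simp add: is_norm_def)

lemma is_norm_triangle: "N (x + y) \<le> N x + N y"
  using N by (simp add: is_norm_def)

lemma is_norm_zero: "N 0 = 0"
  by (simp add: is_norm_eq_zero_iff)

lemma is_norm_minus_commute: "N (x - y) = N (y - x)"
  using is_norm_scaleR[of "-1" "x - y"] by simp

lemma is_norm_triangle_diff: "\<bar>N x - N y\<bar> \<le> N (x - y)"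
  using is_norm_triangle[of "x - y" y] is_norm_triangle[of "y - x" x] is_norm_minus_commute[of x y]
  by simp

lemma is_norm_sum_le: "N (sum f A) \<le> (\<Sum>i\<in>A. N (f i))"
proof (induction A rule: infinite_finite_induct)
  case (insert a A)
  then show ?case
    using is_norm_triangle[of "f a" "sum f A"] by simp
qed (simp_all add: is_norm_zero)

lemma convex_on_is_norm_power2: "convex_on UNIV (\<lambda>x. (N x)\<^sup>2)"
proof (rule convex_onI)
  fix t :: real and x y :: 'a
  assume t: "0 < t" "t < 1"
  have "N ((1 - t) *\<^sub>R x + t *\<^sub>R y) \<le> (1 - t) * N x + t * N y"
    using is_norm_triangle[of "(1 - t) *\<^sub>R x" "t *\<^sub>R y"] is_norm_scaleR[of "1 - t" x]
      is_norm_scaleR[of t y] t by simp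
  then have "(N ((1 - t) *\<^sub>R x + t *\<^sub>R y))\<^sup>2 \<le> ((1 - t) * N x + t * N y)\<^sup>2"
    by (simp add: power_mono is_norm_nonneg)
  also have "\<dots> = (1 - t) * (N x)\<^sup>2 + t * (N y)\<^sup>2 - t * (1 - t) * (N x - N y)\<^sup>2"
    by (simp add: power2_eq_square algebra_simps)
  also have "\<dots> \<le> (1 - t) * (N x)\<^sup>2 + t * (N y)\<^sup>2"
    using t by simp
  finally show "(N ((1 - t) *\<^sub>R x + t *\<^sub>R y))\<^sup>2 \<le> (1 - t) * (N x)\<^sup>2 + t * (N y)\<^sup>2" .
qed simp

end

context
  fixes N :: "'a::euclidean_space \<Rightarrow> real"
  assumes N: "is_norm N"
begin

lemma is_norm_le_norm: "\<exists>K>0. \<forall>x. N x \<le> K * norm x"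
proof (intro exI conjI allI)
  let ?K = "(\<Sum>b\<in>Basis. N b) + 1"
  show "?K > 0"
    by (simp add: sum_nonneg is_norm_nonneg[OF N] add_nonneg_pos)
  fix x :: 'a
  have "N x = N (\<Sum>b\<in>Basis. inner x b *\<^sub>R b)"
    by (simp add: euclidean_representation)
  also have "\<dots> \<le> (\<Sum>b\<in>Basis. N (inner x b *\<^sub>R b))"
    by (rule is_norm_sum_le[OF N])
  also have "\<dots> = (\<Sum>b\<in>Basis. \<bar>inner x b\<bar> * N b)"
    by (simp add: is_norm_scaleR[OF N])
  also have "\<dots> \<le> (\<Sum>b\<in>Basis. norm x * N b)"
    by (rule sum_mono) (simp add: Basis_le_norm mult_right_mono is_norm_nonneg[OF N])
  also have "\<dots> \<le> ?K * norm x"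
    by (simp add: sum_distrib_left algebra_simps)
  finally show "N x \<le> ?K * norm x" .
qed

lemma continuous_on_is_norm: "continuous_on S N"
proof -
  obtain K where K: "K > 0" "\<And>x. N x \<le> K * norm x"
    using is_norm_le_norm by blast
  have "K-lipschitz_on S N"
  proof (rule lipschitz_onI)
    fix x y
    show "dist (N x) (N y) \<le> K * dist x y"
      using is_norm_triangle_diff[OF N, of x y] K(2)[of "x - y"] by (simp add: dist_real_def dist_norm)
  qed (use K in simp)
  then show ?thesis
    by (rule lipschitz_on_continuous_on)
qed

lemma is_norm_ge_norm: "\<exists>m>0. \<forall>x. m * norm x \<le> N x"
proof -
  have "sphere (0::'a) 1 \<noteq> {}"
    using SOME_Basis by (auto simp: norm_Basis)
  then obtain x0 where x0: "x0 \<in> sphere 0 1" "\<And>y. y \<in> sphere 0 1 \<Longrightarrow> N x0 \<le> N y"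
    using continuous_attains_inf[OF compact_sphere _ continuous_on_is_norm] by blast
  have "N x0 * norm x \<le> N x" for x
  proof (cases "x = 0")
    case False
    have "N x0 \<le> N ((1 / norm x) *\<^sub>R x)"
      using x0(2) False by simp
    also have "\<dots> = N x / norm x"
      by (simp add: is_norm_scaleR[OF N])
    finally show ?thesis
      using False by (simp add: field_simps)
  qed (simp add: is_norm_zero[OF N])
  moreover have "N x0 > 0"
    using x0(1) is_norm_nonneg[OF N, of x0] is_norm_eq_zero_iff[OF N, of x0] by auto
  ultimately show ?thesis
    by blast
qed

end

text \<open>The gauge of the unit sublevel set: the triangle inequality is convexity at the point
  \<open>(x + y) / (s + t)\<close>, a convex combination of \<open>x / s\<close> and \<open>y / t\<close>.\<close>

lemma is_norm_sqrt_homogeneous_convex: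
  fixes q :: "'a::real_vector \<Rightarrow> real"
  assumes convex: "convex_on UNIV q"
    and homogeneous: "\<And>c x. q (c *\<^sub>R x) = c\<^sup>2 * q x"
    and definite: "\<And>x. q x = 0 \<Longrightarrow> x = 0"
  shows "is_norm (\<lambda>x. sqrt (q x))"
proof -
  have q0: "q 0 = 0"
    using homogeneous[of 0 0] by simp
  have nonneg: "0 \<le> q x" for x
  proof -
    have "q 0 \<le> (1 - 1/2) * q x + 1/2 * q (- x)"
      using convex_onD[OF convex, of "1/2" x "- x"] by simp
    then show ?thesis
      using homogeneous[of "-1" x] q0 by simp
  qed
  have unit: "q ((1 / sqrt (q x)) *\<^sub>R x) = 1" if "x \<noteq> 0" for x
  proof -
    have "q x \<noteq> 0"
      using definite that by blast
    then show ?thesis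
      using nonneg[of x] by (simp add: homogeneous power_divide)
  qed
  have triangle: "sqrt (q (x + y)) \<le> sqrt (q x) + sqrt (q y)" if "x \<noteq> 0" "y \<noteq> 0" for x y
  proof -
    define s t where "s = sqrt (q x)" and "t = sqrt (q y)"
    have "q x \<noteq> 0" "q y \<noteq> 0"
      using definite that by blast+
    then have st: "s > 0" "t > 0"
      unfolding s_def t_def using nonneg[of x] nonneg[of y] by auto
    define \<tau> where "\<tau> = t / (s + t)"
    have \<tau>: "0 \<le> \<tau>" "\<tau> \<le> 1"
      unfolding \<tau>_def using st by auto
    have "(1 - \<tau>) *\<^sub>R ((1 / s) *\<^sub>R x) + \<tau> *\<^sub>R ((1 / t) *\<^sub>R y) = (1 / (s + t)) *\<^sub>R (x + y)"
      unfolding \<tau>_def using st by (simp add: field_simps scaleR_right_distrib)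
    moreover have "q ((1 - \<tau>) *\<^sub>R ((1 / s) *\<^sub>R x) + \<tau> *\<^sub>R ((1 / t) *\<^sub>R y))
        \<le> (1 - \<tau>) * q ((1 / s) *\<^sub>R x) + \<tau> * q ((1 / t) *\<^sub>R y)"
      by (rule convex_onD[OF convex \<tau>]) simp_all
    ultimately have "q ((1 / (s + t)) *\<^sub>R (x + y)) \<le> 1"
      using unit[OF that(1)] unit[OF that(2)] unfolding s_def t_def by simp
    moreover have "q (x + y) = (s + t)\<^sup>2 * q ((1 / (s + t)) *\<^sub>R (x + y))"
      using homogeneous[of "s + t" "(1 / (s + t)) *\<^sub>R (x + y)"] st by simp
    ultimately have "q (x + y) \<le> (s + t)\<^sup>2"
      by (simp add: mult_left_le)
    then show ?thesis
      using st by (intro real_le_lsqrt) (simp_all add: s_def t_def)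
  qed
  show ?thesis
    unfolding is_norm_def
  proof (intro conjI allI)
    show "sqrt (q (c *\<^sub>R x)) = \<bar>c\<bar> * sqrt (q x)" for c x
      by (simp add: homogeneous real_sqrt_mult)
    show "sqrt (q (x + y)) \<le> sqrt (q x) + sqrt (q y)" for x y
      using triangle[of x y] nonneg by (cases "x = 0 \<or> y = 0") auto
  qed (use nonneg definite q0 in auto)
qed

section \<open>Convex functions with a quadratic upper bound\<close>

text \<open>Convexity at the midpoint \<open>x\<close> of \<open>y\<close> and \<open>2x - y\<close> turns the upper bound into the matching
  lower bound, so the first-order remainder is \<open>O(\<parallel>y - x\<parallel>\<^sup>2)\<close>.\<close>

lemma convex_quadratic_upper_bound_has_derivative:
  fixes f :: "'a::real_normed_vector \<Rightarrow> real"
  assumes convex: "convex_on UNIV f" and D: "bounded_linear D"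
    and upper: "\<And>y. f y \<le> f x + D (y - x) + C * (norm (y - x))\<^sup>2"
  shows "(f has_derivative D) (at x)"
proof -
  have remainder: "\<bar>f y - f x - D (y - x)\<bar> \<le> C * (norm (y - x))\<^sup>2" for y
  proof -
    have "x = (1 - 1/2) *\<^sub>R y + (1/2::real) *\<^sub>R (2 *\<^sub>R x - y)"
      by (simp add: algebra_simps)
    then have "f x \<le> (1 - 1/2) * f y + 1/2 * f (2 *\<^sub>R x - y)"
      using convex_onD[OF convex, of "1/2" y "2 *\<^sub>R x - y"] by simp
    moreover have "f (2 *\<^sub>R x - y) \<le> f x - D (y - x) + C * (norm (y - x))\<^sup>2"
      using upper[of "2 *\<^sub>R x - y"] linear_diff[OF bounded_linear.linear[OF D], of x y]
        linear_diff[OF bounded_linear.linear[OF D], of y x]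
      by (simp add: algebra_simps scaleR_2 norm_minus_commute)
    ultimately show ?thesis
      using upper[of y] by (simp add: abs_le_iff)
  qed
  show ?thesis
    unfolding has_derivative_iff_norm
  proof (intro conjI D)
    have "((\<lambda>y. C * norm (y - x)) \<longlongrightarrow> C * norm (x - x)) (at x)"
      by (intro tendsto_intros)
    then have lim: "((\<lambda>y. C * norm (y - x)) \<longlongrightarrow> 0) (at x)"
      by simp
    show "((\<lambda>y. norm (f y - f x - D (y - x)) / norm (y - x)) \<longlongrightarrow> 0) (at x)"
    proof (rule Lim_null_comparison[OF always_eventually lim], intro allI)
      fix y
      show "norm (norm (f y - f x - D (y - x)) / norm (y - x)) \<le> C * norm (y - x)"
        using divide_right_mono[OF remainder[of y], of "norm (y - x)"]
        by (cases "y = x") (simp_all add: power2_eq_square)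
    qed
  qed
qed

lemma smooth_wrt_of_quadratic_upper_bound:
  fixes h :: "real^'d \<Rightarrow> real"
  assumes N: "is_norm N" and convex: "convex_on UNIV h"
    and upper: "\<And>x. \<exists>D. bounded_linear D \<and> (\<forall>y. h y \<le> h x + D (y - x) + L / 2 * (N (x - y))\<^sup>2)"
  shows "smooth_wrt N L h"
proof -
  obtain K where K: "\<And>z. N z \<le> K * norm z"
    using is_norm_le_norm[OF N] by blast
  have "\<exists>D. (h has_derivative D) (at x) \<and> (\<forall>y. h y \<le> h x + D (y - x) + L / 2 * (N (x - y))\<^sup>2)"
    for x
  proof -
    obtain D where D: "bounded_linear D" "\<And>y. h y \<le> h x + D (y - x) + L / 2 * (N (x - y))\<^sup>2"
      using upper by blast
    have quadratic: "L / 2 * (N (x - y))\<^sup>2 \<le> \<bar>L\<bar> / 2 * K\<^sup>2 * (norm (y - x))\<^sup>2" for y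
    proof -
      have "(N (x - y))\<^sup>2 \<le> (K * norm (y - x))\<^sup>2"
        using K[of "x - y"] is_norm_nonneg[OF N] by (intro power_mono) (auto simp: norm_minus_commute)
      then have "\<bar>L\<bar> / 2 * (N (x - y))\<^sup>2 \<le> \<bar>L\<bar> / 2 * (K * norm (y - x))\<^sup>2"
        by (rule mult_left_mono) simp
      moreover have "L / 2 * (N (x - y))\<^sup>2 \<le> \<bar>L\<bar> / 2 * (N (x - y))\<^sup>2"
        by (intro mult_right_mono) auto
      ultimately show ?thesis
        by (simp add: power_mult_distrib)
    qed
    have "h y \<le> h x + D (y - x) + \<bar>L\<bar> / 2 * K\<^sup>2 * (norm (y - x))\<^sup>2" for y
      using D(2)[of y] quadratic[of y] by linarith
    then have "(h has_derivative D) (at x)"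
      by (rule convex_quadratic_upper_bound_has_derivative[OF convex D(1)])
    then show ?thesis
      using D by blast
  qed
  then show ?thesis
    unfolding smooth_wrt_def using convex frechet_derivative_at differentiable_def by metis
qed

section \<open>Moreau envelopes with attained minima\<close>

lemma moreau_env_eq_min:
  assumes "\<And>v. f u + 1 / \<mu> * g (x - u) \<le> f v + 1 / \<mu> * g (x - v)"
  shows "moreau_env f g \<mu> x = f u + 1 / \<mu> * g (x - u)"
  unfolding moreau_env_def by (rule cInf_eq_minimum) (use assms in auto)

context
  fixes f g :: "real^'d \<Rightarrow> real" and \<mu> :: real
  assumes attained: "\<And>x. \<exists>u. \<forall>v. f u + 1 / \<mu> * g (x - u) \<le> f v + 1 / \<mu> * g (x - v)"
begin

lemma moreau_env_le: "moreau_env f g \<mu> x \<le> f v + 1 / \<mu> * g (x - v)"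
  using attained[of x] moreau_env_eq_min by metis

lemma convex_on_moreau_env:
  assumes "convex_on UNIV f" "convex_on UNIV g" "0 < \<mu>"
  shows "convex_on UNIV (moreau_env f g \<mu>)"
proof (rule convex_onI)
  fix t :: real and x y :: "real^'d"
  assume t: "0 < t" "t < 1"
  obtain ux uy where ux: "\<And>v. f ux + 1 / \<mu> * g (x - ux) \<le> f v + 1 / \<mu> * g (x - v)"
    and uy: "\<And>v. f uy + 1 / \<mu> * g (y - uy) \<le> f v + 1 / \<mu> * g (y - v)"
    using attained by metis
  have "(1 - t) *\<^sub>R x + t *\<^sub>R y - ((1 - t) *\<^sub>R ux + t *\<^sub>R uy) = (1 - t) *\<^sub>R (x - ux) + t *\<^sub>R (y - uy)"
    by (simp add: algebra_simps)
  then have "g ((1 - t) *\<^sub>R x + t *\<^sub>R y - ((1 - t) *\<^sub>R ux + t *\<^sub>R uy))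
      \<le> (1 - t) * g (x - ux) + t * g (y - uy)"
    using convex_onD[OF assms(2)] t by simp
  moreover have "f ((1 - t) *\<^sub>R ux + t *\<^sub>R uy) \<le> (1 - t) * f ux + t * f uy"
    using convex_onD[OF assms(1)] t by simp
  moreover have "0 \<le> 1 / \<mu>"
    using assms(3) by simp
  ultimately have "moreau_env f g \<mu> ((1 - t) *\<^sub>R x + t *\<^sub>R y)
      \<le> (1 - t) * f ux + t * f uy + 1 / \<mu> * ((1 - t) * g (x - ux) + t * g (y - uy))"
    using moreau_env_le[of "(1 - t) *\<^sub>R x + t *\<^sub>R y" "(1 - t) *\<^sub>R ux + t *\<^sub>R uy"]
    by (meson add_mono mult_left_mono order_trans)
  also have "\<dots> = (1 - t) * (f ux + 1 / \<mu> * g (x - ux)) + t * (f uy + 1 / \<mu> * g (y - uy))"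
    using assms(3) by (simp add: field_simps)
  finally show "moreau_env f g \<mu> ((1 - t) *\<^sub>R x + t *\<^sub>R y) \<le> (1 - t) * moreau_env f g \<mu> x + t * moreau_env f g \<mu> y"
    using moreau_env_eq_min[where f=f and g=g and \<mu>=\<mu>, OF ux]
      moreau_env_eq_min[where f=f and g=g and \<mu>=\<mu>, OF uy] by simp
qed simp

lemma moreau_env_scaleR:
  assumes "\<And>c x. f (c *\<^sub>R x) = c\<^sup>2 * f x" "\<And>c x. g (c *\<^sub>R x) = c\<^sup>2 * g x"
  shows "moreau_env f g \<mu> (c *\<^sub>R x) = c\<^sup>2 * moreau_env f g \<mu> x"
proof -
  have le: "moreau_env f g \<mu> (c *\<^sub>R x) \<le> c\<^sup>2 * moreau_env f g \<mu> x" for c x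
  proof -
    obtain u where u: "\<And>v. f u + 1 / \<mu> * g (x - u) \<le> f v + 1 / \<mu> * g (x - v)"
      using attained by blast
    have "moreau_env f g \<mu> (c *\<^sub>R x) \<le> f (c *\<^sub>R u) + 1 / \<mu> * g (c *\<^sub>R (x - u))"
      using moreau_env_le[of "c *\<^sub>R x" "c *\<^sub>R u"] by (simp add: scaleR_diff_right)
    also have "\<dots> = c\<^sup>2 * (f u + 1 / \<mu> * g (x - u))"
      by (simp only: assms) (simp add: algebra_simps)
    finally show ?thesis
      using moreau_env_eq_min[where f=f and g=g and \<mu>=\<mu>, OF u] by simp
  qed
  show ?thesis
  proof (cases "c = 0")
    case True
    have "moreau_env f g \<mu> 0 \<le> 4 * moreau_env f g \<mu> 0" "moreau_env f g \<mu> 0 \<le> 0"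
      using le[of 2 0] le[of 0 0] by simp_all
    then show ?thesis
      using True by simp
  next
    case False
    have "moreau_env f g \<mu> x \<le> (1 / c)\<^sup>2 * moreau_env f g \<mu> (c *\<^sub>R x)"
      using le[of "1 / c" "c *\<^sub>R x"] False by simp
    then have "c\<^sup>2 * moreau_env f g \<mu> x \<le> moreau_env f g \<mu> (c *\<^sub>R x)"
      using False by (simp add: field_simps power_divide)
    then show ?thesis
      using le[of c x] by linarith
  qed
qed

end

section \<open>The envelope of two squared norms\<close>

lemma real_sum_power2_le_weighted:
  fixes a b p :: real
  assumes "0 < p"
  shows "(a + b)\<^sup>2 \<le> (1 + p) * (a\<^sup>2 + b\<^sup>2 / p)"
proof -
  have "(1 + p) * (a\<^sup>2 + b\<^sup>2 / p) - (a + b)\<^sup>2 = (p * a - b)\<^sup>2 / p"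
    using assms by (simp add: field_simps power2_eq_square)
  moreover have "0 \<le> (p * a - b)\<^sup>2 / p"
    using assms by simp
  ultimately show ?thesis
    by linarith
qed

lemma continuous_attains_inf_bounded_sublevel:
  fixes h :: "'a::heine_borel \<Rightarrow> real"
  assumes "continuous_on UNIV h" "bounded {u. h u \<le> h u0}"
  shows "\<exists>u. \<forall>v. h u \<le> h v"
proof -
  have "compact {u. h u \<le> h u0}"
    using assms by (simp add: compact_eq_bounded_closed closed_Collect_le continuous_on_const)
  then obtain u where "h u \<le> h u0" "\<And>v. h v \<le> h u0 \<Longrightarrow> h u \<le> h v"
    using continuous_attains_inf[of "{u. h u \<le> h u0}" h] continuous_on_subset[OF assms(1)] by force
  then show ?thesis
    by (metis linorder_le_cases order_trans)
qed

locale squared_norms_envelope =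
  fixes Nc Ns :: "real^'d \<Rightarrow> real" and \<mu> :: real
  assumes Nc: "is_norm Nc" and Ns: "is_norm Ns" and \<mu>: "0 < \<mu>"
begin

abbreviation f :: "real^'d \<Rightarrow> real" where "f \<equiv> \<lambda>x. 1/2 * (Nc x)\<^sup>2"
abbreviation g :: "real^'d \<Rightarrow> real" where "g \<equiv> \<lambda>x. 1/2 * (Ns x)\<^sup>2"
abbreviation M :: "real^'d \<Rightarrow> real" where "M \<equiv> moreau_env f g \<mu>"

lemma moreau_attained: "\<exists>u. \<forall>v. f u + 1 / \<mu> * g (x - u) \<le> f v + 1 / \<mu> * g (x - v)"
proof (rule continuous_attains_inf_bounded_sublevel)
  show "continuous_on UNIV (\<lambda>u. f u + 1 / \<mu> * g (x - u))"
    by (intro continuous_intros continuous_on_compose2[OF continuous_on_is_norm[OF Ns]]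
        continuous_on_compose2[OF continuous_on_is_norm[OF Nc]]) auto
  obtain m where m: "m > 0" "\<And>u. m * norm u \<le> Nc u"
    using is_norm_ge_norm[OF Nc] by blast
  let ?R = "f 0 + 1 / \<mu> * g (x - 0)"
  show "bounded {u. f u + 1 / \<mu> * g (x - u) \<le> ?R}"
    unfolding bounded_iff
  proof (intro exI ballI)
    fix u
    assume "u \<in> {u. f u + 1 / \<mu> * g (x - u) \<le> ?R}"
    moreover have "0 \<le> 1 / \<mu> * g (x - u)"
      using \<mu> by simp
    moreover have "(m * norm u)\<^sup>2 \<le> (Nc u)\<^sup>2"
      using m by (simp add: power_mono)
    ultimately have "(norm u)\<^sup>2 \<le> 2 * ?R / m\<^sup>2"
      using m(1) by (simp add: field_simps power_mult_distrib)
    then show "norm u \<le> sqrt (2 * ?R / m\<^sup>2)"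
      by (simp add: real_le_rsqrt)
  qed
qed

lemma M_eq_min:
  obtains u where "M x = f u + 1 / \<mu> * g (x - u)"
  using moreau_attained[of x] moreau_env_eq_min by metis

lemma M_le: "M x \<le> f v + 1 / \<mu> * g (x - v)"
  by (rule moreau_env_le[OF moreau_attained])

lemma M_convex: "convex_on UNIV M"
  using convex_on_is_norm_power2[OF Nc] convex_on_is_norm_power2[OF Ns] \<mu>
  by (intro convex_on_moreau_env moreau_attained convex_on_cmul) auto

lemma M_scaleR: "M (c *\<^sub>R x) = c\<^sup>2 * M x"
  by (rule moreau_env_scaleR[OF moreau_attained])
    (simp_all add: is_norm_scaleR[OF Nc] is_norm_scaleR[OF Ns] power_mult_distrib)

lemma M_nonneg: "0 \<le> M x"
proof -
  obtain u where "M x = f u + 1 / \<mu> * g (x - u)"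
    by (rule M_eq_min)
  then show ?thesis
    using \<mu> by simp
qed

lemma M_eq_zero_imp_eq_zero: "M x = 0 \<Longrightarrow> x = 0"
proof -
  assume "M x = 0"
  obtain u where u: "M x = f u + 1 / \<mu> * g (x - u)"
    by (rule M_eq_min)
  have "0 \<le> f u" "0 \<le> 1 / \<mu> * g (x - u)"
    using \<mu> by simp_all
  then have "f u = 0" "1 / \<mu> * g (x - u) = 0"
    using u \<open>M x = 0\<close> by linarith+
  then have "Nc u = 0" "Ns (x - u) = 0"
    using \<mu> by simp_all
  then show "x = 0"
    using is_norm_eq_zero_iff[OF Nc] is_norm_eq_zero_iff[OF Ns] by simp
qed

lemma M_is_half_norm_power2: "\<exists>NM. is_norm NM \<and> (\<forall>x. M x = 1/2 * (NM x)\<^sup>2)"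
proof (intro exI conjI allI)
  show "is_norm (\<lambda>x. sqrt (2 * M x))"
  proof (rule is_norm_sqrt_homogeneous_convex)
    show "convex_on UNIV (\<lambda>x. 2 * M x)"
      using M_convex by (rule convex_on_cmul[rotated]) simp
    show "2 * M (c *\<^sub>R x) = c\<^sup>2 * (2 * M x)" for c x
      unfolding M_scaleR by (rule mult.left_commute)
  qed (use M_eq_zero_imp_eq_zero in simp)
  show "M x = 1/2 * (sqrt (2 * M x))\<^sup>2" for x
    using M_nonneg[of x] by simp
qed

text \<open>The test point \<open>u = K / (\<mu> + K) x\<close> with \<open>K = ucs\<^sup>2\<close> balances the two terms of the envelope.\<close>

lemma M_upper_bound:
  assumes "0 < ucs" "Ns x \<le> ucs * Nc x"
  shows "(1 + \<mu> / ucs\<^sup>2) * M x \<le> f x"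
proof -
  define K where "K = ucs\<^sup>2"
  have K: "K > 0"
    unfolding K_def using assms(1) by simp
  have "(Ns x)\<^sup>2 \<le> (ucs * Nc x)\<^sup>2"
    using assms(2) is_norm_nonneg[OF Ns] by (rule power_mono)
  then have "(Ns x)\<^sup>2 \<le> K * (Nc x)\<^sup>2"
    unfolding K_def by (simp add: power_mult_distrib)
  define a b where "a = K / (\<mu> + K)" and "b = \<mu> / (\<mu> + K)"
  have ab: "0 \<le> a" "0 \<le> b"
    unfolding a_def b_def using K \<mu> by simp_all
  have "x - a *\<^sub>R x = (1 - a) *\<^sub>R x"
    by (simp add: scaleR_diff_left)
  also have "1 - a = b"
    unfolding a_def b_def using K \<mu> by (simp add: field_simps)
  finally have "M x \<le> f (a *\<^sub>R x) + 1 / \<mu> * g (b *\<^sub>R x)"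
    using M_le[of x "a *\<^sub>R x"] by simp
  also have "\<dots> = 1/2 * a\<^sup>2 * (Nc x)\<^sup>2 + 1 / \<mu> * (1/2 * b\<^sup>2 * (Ns x)\<^sup>2)"
    using ab by (simp add: is_norm_scaleR[OF Nc] is_norm_scaleR[OF Ns] power_mult_distrib)
  also have "\<dots> \<le> 1/2 * a\<^sup>2 * (Nc x)\<^sup>2 + 1 / \<mu> * (1/2 * b\<^sup>2 * (K * (Nc x)\<^sup>2))"
    using \<open>(Ns x)\<^sup>2 \<le> K * (Nc x)\<^sup>2\<close> \<mu> by (intro add_left_mono mult_left_mono) auto
  also have "\<dots> = K / (\<mu> + K) * f x"
    unfolding a_def b_def using K \<mu> by (simp add: divide_simps) algebra
  finally show ?thesis
    unfolding K_def[symmetric] using K \<mu> by (simp add: field_simps)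
qed

lemma M_lower_bound:
  assumes "0 < lcs" "\<And>z. lcs * Nc z \<le> Ns z"
  shows "f x \<le> (1 + \<mu> / lcs\<^sup>2) * M x"
proof -
  obtain u where u: "M x = f u + 1 / \<mu> * g (x - u)"
    by (rule M_eq_min)
  define p where "p = \<mu> / lcs\<^sup>2"
  have p: "p > 0"
    unfolding p_def using \<mu> assms(1) by simp
  have "(Nc (x - u))\<^sup>2 / p = (lcs * Nc (x - u))\<^sup>2 / \<mu>"
    unfolding p_def using assms(1) by (simp add: power_mult_distrib)
  also have "\<dots> \<le> (Ns (x - u))\<^sup>2 / \<mu>"
    using assms is_norm_nonneg[OF Nc] \<mu> by (intro divide_right_mono power_mono) auto
  finally have "(Nc u)\<^sup>2 + (Nc (x - u))\<^sup>2 / p \<le> 2 * M x"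
    using u by simp
  have "(Nc x)\<^sup>2 \<le> (Nc u + Nc (x - u))\<^sup>2"
    using is_norm_triangle[OF Nc, of u "x - u"] is_norm_nonneg[OF Nc] by (intro power_mono) auto
  also have "\<dots> \<le> (1 + p) * ((Nc u)\<^sup>2 + (Nc (x - u))\<^sup>2 / p)"
    using p by (rule real_sum_power2_le_weighted)
  also have "\<dots> \<le> (1 + p) * (2 * M x)"
    using p \<open>(Nc u)\<^sup>2 + (Nc (x - u))\<^sup>2 / p \<le> 2 * M x\<close> by (intro mult_left_mono) auto
  also have "\<dots> = 2 * ((1 + p) * M x)"
    by (rule mult.left_commute)
  finally have "1/2 * (Nc x)\<^sup>2 \<le> (1 + p) * M x"
    by linarith
  then show ?thesis
    unfolding p_def by simp
qed

lemma M_smooth: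
  assumes "smooth_wrt Ns L g"
  shows "smooth_wrt Ns (L / \<mu>) M"
proof (rule smooth_wrt_of_quadratic_upper_bound[OF Ns M_convex])
  fix x
  obtain u where u: "M x = f u + 1 / \<mu> * g (x - u)"
    by (rule M_eq_min)
  let ?g' = "frechet_derivative g (at (x - u))"
  have "(g has_derivative ?g') (at (x - u))"
    using assms frechet_derivative_works unfolding smooth_wrt_def by blast
  then have "bounded_linear (\<lambda>h. ?g' h / \<mu>)"
    by (intro bounded_linear_compose[OF bounded_linear_divide] has_derivative_bounded_linear)
  moreover have "M y \<le> M x + ?g' (y - x) / \<mu> + L / \<mu> / 2 * (Ns (x - y))\<^sup>2" for y
  proof -
    have "(y - u) - (x - u) = y - x" "(x - u) - (y - u) = x - y"
      by simp_all
    then have "g (y - u) \<le> g (x - u) + ?g' (y - x) + L / 2 * (Ns (x - y))\<^sup>2"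
      using assms unfolding smooth_wrt_def by metis
    then have "1 / \<mu> * g (y - u) \<le> 1 / \<mu> * (g (x - u) + ?g' (y - x) + L / 2 * (Ns (x - y))\<^sup>2)"
      using \<mu> by (intro mult_left_mono) auto
    also have "\<dots> = 1 / \<mu> * g (x - u) + ?g' (y - x) / \<mu> + L / \<mu> / 2 * (Ns (x - y))\<^sup>2"
      by (simp add: algebra_simps)
    finally show ?thesis
      using M_le[of y u] u by linarith
  qed
  ultimately show "\<exists>D. bounded_linear D \<and> (\<forall>y. M y \<le> M x + D (y - x) + L / \<mu> / 2 * (Ns (x - y))\<^sup>2)"
    by blast
qed

end

theorem lemma1:
  fixes Nc Ns :: "real^'d \<Rightarrow> real" and L lcs ucs \<mu> :: real
  assumes "is_norm Nc" and "is_norm Ns"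
    and "smooth_wrt Ns L (\<lambda>x. 1/2 * (Ns x)\<^sup>2)"
    and "0 < lcs" and "lcs \<le> 1" and "1 \<le> ucs"
    and "\<forall>x. lcs * Nc x \<le> Ns x \<and> Ns x \<le> ucs * Nc x"
    and "0 < \<mu>"
  shows "smooth_wrt Ns (L / \<mu>) (moreau_env (\<lambda>x. 1/2 * (Nc x)\<^sup>2) (\<lambda>x. 1/2 * (Ns x)\<^sup>2) \<mu>)
    \<and> (\<forall>x. (1 + \<mu> / ucs\<^sup>2) * moreau_env (\<lambda>x. 1/2 * (Nc x)\<^sup>2) (\<lambda>x. 1/2 * (Ns x)\<^sup>2) \<mu> x
              \<le> 1/2 * (Nc x)\<^sup>2
         \<and> 1/2 * (Nc x)\<^sup>2
              \<le> (1 + \<mu> / lcs\<^sup>2) * moreau_env (\<lambda>x. 1/2 * (Nc x)\<^sup>2) (\<lambda>x. 1/2 * (Ns x)\<^sup>2) \<mu> x)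
    \<and> (\<exists>NM. is_norm NM \<and>
         (\<forall>x. moreau_env (\<lambda>x. 1/2 * (Nc x)\<^sup>2) (\<lambda>x. 1/2 * (Ns x)\<^sup>2) \<mu> x = 1/2 * (NM x)\<^sup>2))"
proof -
  interpret squared_norms_envelope Nc Ns \<mu>
    using assms by unfold_locales
  have "(1 + \<mu> / ucs\<^sup>2) * M x \<le> f x" for x
    using assms(6,7) by (intro M_upper_bound) auto
  moreover have "f x \<le> (1 + \<mu> / lcs\<^sup>2) * M x" for x
    using assms(4,7) by (intro M_lower_bound) auto
  ultimately show ?thesis
    by (intro conjI allI M_smooth[OF assms(3)] M_is_half_norm_power2)
qed

end
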